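(* Let $\nu\in\mathcal P_s$ with $\nu(\{0\})=0$. For every $n\in\mathbb N$, every $x\in\mathbb R$ and every $t>0$ with $\nu(\{t\})=0$, $$\big(\delta_x\vartriangle_\alpha\nu^{\vartriangle_\alpha n}\big)\big((0,t)\big)=\tfrac12\Big[\Psi\big(\tfrac{x}{t}\big)H_n(t)+G(t)^n\Big]\mathbf 1_{\{|x|<t\}},$$ where $H_n(t)=2F_n(t)-1-G(t)^n$ and $F_n(t)=\nu^{\vartriangle_\alpha n}((-\infty,t])$. In particular, for the Kendall random walk with step distribution $\nu$, $P_n(x,(0,t))$ equals the right-hand side.
   Context: Fix $\alpha>0$. $\mathcal P_s$ is the set of symmetric Borel probability measures on $\mathbb R$. For $x\in\mathbb R$, $\widetilde\delta_x=\frac12(\delta_x+\delta_{-x})$. For a probability measure $\lambda=\mathcal L(X)$ and $c>0$, $T_c\lambda=\mathcal L(cX)$, and $T_0\lambda=\delta_0$. $\widetilde\pi_{2\alpha}$ is the symmetric Pareto probability measure with density $\alpha|y|^{-2\alpha-1}\mathbf 1_{\{|y|\ge1\}}$. The Kendall convolution $\vartriangle_\alpha$ on $\mathcal P_s$ is defined by $\widetilde\delta_x\vartriangle_\alpha\widetilde\delta_y=T_M\big(\varrho^\alpha\widetilde\pi_{2\alpha}+(1-\varrho^\alpha)\widetilde\delta_1\big)$ where $M=\max(|x|,|y|)$, $m=\min(|x|,|y|)$, $\varrho=m/M$ (and $\varrho=0$ if $M=0$), extended by $(\nu_1\vartriangle_\alpha\nu_2)(A)=\int\int(\widetilde\delta_x\vartriangle_\alpha\widetilde\delta_y)(A)\,\nu_1(dx)\nu_2(dy)$;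 $\nu^{\vartriangle_\alpha n}$ is the $n$-fold convolution power. For $x\in\mathbb R$ and $\mu\in\mathcal P_s$ we write $\delta_x\vartriangle_\alpha\mu:=\widetilde\delta_x\vartriangle_\alpha\mu$. $\Psi(t)=(1-|t|^\alpha)_+$. For the measure $\nu$: $F(t)=\nu((-\infty,t])$, and $G(t)=\int_{\mathbb R}\Psi(x/t)\,\nu(dx)$ for $t\neq0$. The Kendall random walk with step distribution $\nu$ is the Markov chain $(X_n)_{n\ge0}$ with $X_0=0$ and transition probabilities $P_n(x,A)=\mathbb P(X_{k+n}\in A\mid X_k=x)=(\delta_x\vartriangle_\alpha\nu^{\vartriangle_\alpha n})(A)$. *)

theory Defs
  imports "HOL-Probability.Probability"
begin

definition sym_prob :: "real measure \<Rightarrow> bool" where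
  "sym_prob \<nu> \<longleftrightarrow> prob_space \<nu> \<and> sets \<nu> = sets borel \<and>
     (\<forall>A\<in>sets borel. emeasure \<nu> (uminus ` A) = emeasure \<nu> A)"

definition tdelta :: "real \<Rightarrow> real measure" where
  "tdelta x = measure_of UNIV (sets borel)
     (\<lambda>A. ennreal ((indicator A x + indicator A (-x)) / 2))"

definition sym_pareto :: "real \<Rightarrow> real measure" where
  "sym_pareto \<alpha> = density lborel
     (\<lambda>y. ennreal (\<alpha> * \<bar>y\<bar> powr (-2*\<alpha> - 1)) * indicator {y. \<bar>y\<bar> \<ge> 1} y)"

definition dil :: "real \<Rightarrow> real measure \<Rightarrow> real measure" where
  "dil c \<mu> = distr \<mu> borel (\<lambda>z. c * z)"

text \<open>The Kendall convolution of two symmetrized Dirac measures, evaluated on a set A: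
  T_M (rho^alpha pi_{2 alpha} + (1 - rho^alpha) tdelta 1) (A).\<close>
definition kbase :: "real \<Rightarrow> real \<Rightarrow> real \<Rightarrow> real set \<Rightarrow> real" where
  "kbase \<alpha> x y A =
    (let M = max \<bar>x\<bar> \<bar>y\<bar>; m = min \<bar>x\<bar> \<bar>y\<bar>;
         \<rho> = (if M = 0 then 0 else m / M)
     in \<rho> powr \<alpha> * measure (dil M (sym_pareto \<alpha>)) A
        + (1 - \<rho> powr \<alpha>) * measure (dil M (tdelta 1)) A)"

definition kconv :: "real \<Rightarrow> real measure \<Rightarrow> real measure \<Rightarrow> real measure" where
  "kconv \<alpha> \<nu>1 \<nu>2 = measure_of UNIV (sets borel)
     (\<lambda>A. \<integral>\<^sup>+ x. \<integral>\<^sup>+ y. ennreal (kbase \<alpha> x y A) \<partial>\<nu>2 \<partial>\<nu>1)"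

fun kpow :: "real \<Rightarrow> real measure \<Rightarrow> nat \<Rightarrow> real measure" where
  "kpow \<alpha> \<nu> 0 = tdelta 0"
| "kpow \<alpha> \<nu> (Suc n) = kconv \<alpha> (kpow \<alpha> \<nu> n) \<nu>"

definition Psi :: "real \<Rightarrow> real \<Rightarrow> real" where
  "Psi \<alpha> t = max 0 (1 - \<bar>t\<bar> powr \<alpha>)"

definition Fdist :: "real measure \<Rightarrow> real \<Rightarrow> real" where
  "Fdist \<nu> t = measure \<nu> {..t}"

definition Gfun :: "real \<Rightarrow> real measure \<Rightarrow> real \<Rightarrow> real" where
  "Gfun \<alpha> \<nu> t = (\<integral> x. Psi \<alpha> (x / t) \<partial>\<nu>)"

definition Hfun :: "real \<Rightarrow> real measure \<Rightarrow> nat \<Rightarrow> real \<Rightarrow> real" where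
  "Hfun \<alpha> \<nu> n t = 2 * Fdist (kpow \<alpha> \<nu> n) t - 1 - Gfun \<alpha> \<nu> t ^ n"

definition kendall_trans :: "real \<Rightarrow> real measure \<Rightarrow> nat \<Rightarrow> real \<Rightarrow> real set \<Rightarrow> real" where
  "kendall_trans \<alpha> \<nu> n x A = measure (kconv \<alpha> (tdelta x) (kpow \<alpha> \<nu> n)) A"

end

theory Submission
  imports Defs
begin

text \<open>
  The convolution of two symmetrized Dirac measures is realised as an honest measure, a
  Bernoulli(\<open>\<rho>\<^sup>\<alpha>\<close>) mixture of the dilated Pareto law and of the dilated symmetrized Dirac measure
  at \<open>M = max |x| |y|\<close>; the Kendall convolution of two laws is the mixture of these kernels, and is
  therefore a symmetric probability measure without atoms where its factors have none.
  Two explicit integrals against the kernel carry the proof. First, the Williamson transform is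
  multiplicative, \<open>\<integral>\<Psi>(z/t) d(\<delta>\<^sub>x \<triangle> \<delta>\<^sub>y) = \<Psi>(x/t) \<Psi>(y/t)\<close>, hence \<open>\<integral>\<Psi>(z/t) d\<nu>\<^sup>\<triangle>\<^sup>n = G(t)\<^sup>n\<close>.
  Second, for \<open>|x|, |y| < t\<close> not both zero the kernel gives \<open>(0,t)\<close> the mass
  \<open>(1 - (|x|/t)\<^sup>\<alpha> (|y|/t)\<^sup>\<alpha>)/2 = (\<Psi>(x/t) + (1 - \<Psi>(x/t)) \<Psi>(y/t))/2\<close>, which is affine in
  \<open>\<Psi>(y/t)\<close>. Integrating it against \<open>\<mu> = \<nu>\<^sup>\<triangle>\<^sup>n\<close> (which has no atom at 0 for \<open>n \<ge> 1\<close>) gives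
  \<open>(\<Psi>(x/t) (\<mu>(-t,t) - G(t)\<^sup>n) + G(t)\<^sup>n)/2\<close>, and by symmetry \<open>\<mu>(-t,t) = 2 F\<^sub>n(t) - 1\<close>
  since \<open>\<mu>\<close> has no atoms at \<open>\<plusminus>t\<close>.
\<close>

lemma measure_of_borel_eqI:
  fixes N :: "real measure"
  assumes "sets N = sets borel" and "\<And>A. A \<in> sets borel \<Longrightarrow> f A = emeasure N A"
  shows "measure_of UNIV (sets borel) f = N"
proof -
  have "measure_of UNIV (sets borel) f = measure_of UNIV (sets borel) (emeasure N)"
  proof (rule measure_of_eq)
    fix A :: "real set" assume "A \<in> sigma_sets UNIV (sets borel)"
    then show "f A = emeasure N A"
      using assms(2) sets.sigma_sets_eq[of "borel::real measure"] by simp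
  qed simp
  also have "\<dots> = N"
    using measure_of_of_measure[of N] sets_eq_imp_space_eq[OF assms(1)] assms(1) by simp
  finally show ?thesis .
qed

definition borel_prob :: "real measure \<Rightarrow> bool" where
  "borel_prob \<mu> \<longleftrightarrow> prob_space \<mu> \<and> sets \<mu> = sets borel"

lemma space_borel_prob: "borel_prob \<mu> \<Longrightarrow> space \<mu> = UNIV"
  unfolding borel_prob_def using sets_eq_imp_space_eq[of \<mu> borel] by auto

lemma borel_measurable_borel_prob:
  "borel_prob \<mu> \<Longrightarrow> f \<in> borel_measurable borel \<Longrightarrow> f \<in> borel_measurable \<mu>"
  unfolding borel_prob_def by (simp cong: measurable_cong_sets)

lemma ennreal_half_times_2: "0 \<le> x \<Longrightarrow> ennreal (x / 2) * 2 = ennreal x"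
  using ennreal_mult[of "x / 2" 2] by simp

lemma ennreal_add_self_half: "(x + x) / 2 = (x :: ennreal)"
proof -
  have "(2::ennreal) * inverse 2 = 1"
    using ennreal_divide_self[of 2] by (simp add: divide_ennreal_def)
  then show ?thesis
    by (simp add: divide_ennreal_def mult_2_right[symmetric] mult.assoc)
qed

lemma ennreal_mixture:
  assumes "0 \<le> r" and "r \<le> 1" and "0 \<le> p" and "0 \<le> q"
  shows "ennreal r * ennreal p + ennreal (1 - r) * ennreal q = ennreal (r * p + (1 - r) * q)"
  using assms by (simp add: ennreal_mult ennreal_plus del: ennreal_eq_0_iff)

lemma enn2real_power: "enn2real (x ^ n) = enn2real x ^ n"
  by (induction n) (simp_all add: enn2real_mult)

lemma nn_integral_random_sign:
  assumes "f \<in> borel_measurable borel"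
  shows "(\<integral>\<^sup>+z. f z \<partial>distr (measure_pmf (bernoulli_pmf (1/2))) borel (\<lambda>b. if b then x else -x))
    = (f x + f (-x)) / 2"
  using assms
  by (simp add: nn_integral_distr nn_integral_measure_pmf_support[of UNIV]
                UNIV_bool divide_ennreal_def algebra_simps)

lemma emeasure_random_sign:
  assumes "A \<in> sets borel"
  shows "emeasure (distr (measure_pmf (bernoulli_pmf (1/2))) borel (\<lambda>b. if b then x else -x)) A
    = ennreal ((indicator A x + indicator A (-x)) / 2)"
  using assms nn_integral_random_sign[of "indicator A" x]
    ennreal_divide_self[of 2, unfolded divide_ennreal_def]
  by (auto split: split_indicator simp: divide_ennreal_def ennreal_mult[symmetric]
           simp flip: nn_integral_indicator)

lemma tdelta_eq_distr:
  "tdelta x = distr (measure_pmf (bernoulli_pmf (1/2))) borel (\<lambda>b. if b then x else -x)"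
  unfolding tdelta_def by (intro measure_of_borel_eqI) (auto simp: emeasure_random_sign)

lemma sets_tdelta [simp, measurable_cong]: "sets (tdelta x) = sets borel"
  by (simp add: tdelta_eq_distr)

lemma borel_prob_tdelta: "borel_prob (tdelta x)"
  unfolding borel_prob_def tdelta_eq_distr
  by (auto intro: prob_space.prob_space_distr prob_space_measure_pmf)

lemma nn_integral_tdelta:
  "f \<in> borel_measurable borel \<Longrightarrow> (\<integral>\<^sup>+z. f z \<partial>tdelta x) = (f x + f (-x)) / 2"
  unfolding tdelta_eq_distr by (rule nn_integral_random_sign)

lemma measure_tdelta:
  "A \<in> sets borel \<Longrightarrow> measure (tdelta x) A = (indicator A x + indicator A (-x)) / 2"
  unfolding measure_def tdelta_eq_distr by (simp add: emeasure_random_sign)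

lemma sets_sym_pareto [simp, measurable_cong]: "sets (sym_pareto a) = sets borel"
  by (simp add: sym_pareto_def)

lemma nn_integral_sym_pareto:
  assumes [measurable]: "f \<in> borel_measurable borel"
  shows "(\<integral>\<^sup>+z. f z \<partial>sym_pareto a) =
    (\<integral>\<^sup>+z. ennreal (a * z powr (-2*a-1)) * indicator {1..} z * (f z + f (-z)) \<partial>lborel)"
proof -
  let ?h1 = "\<lambda>z. ennreal (a * z powr (-2*a-1)) * indicator {1..} z * f z"
  let ?h2 = "\<lambda>z. ennreal (a * \<bar>z\<bar> powr (-2*a-1)) * indicator {..-1} z * f z"
  have "(\<integral>\<^sup>+z. f z \<partial>sym_pareto a) =
     (\<integral>\<^sup>+z. ennreal (a * \<bar>z\<bar> powr (-2*a-1)) * indicator {y. \<bar>y\<bar> \<ge> 1} z * f z \<partial>lborel)"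
    unfolding sym_pareto_def by (subst nn_integral_density) auto
  also have "\<dots> = (\<integral>\<^sup>+z. ?h1 z + ?h2 z \<partial>lborel)"
    by (intro nn_integral_cong) (auto split: split_indicator simp: distrib_right)
  also have "\<dots> = (\<integral>\<^sup>+z. ?h1 z \<partial>lborel) + (\<integral>\<^sup>+z. ?h2 z \<partial>lborel)"
    by (rule nn_integral_add) auto
  also have "(\<integral>\<^sup>+z. ?h2 z \<partial>lborel) = (\<integral>\<^sup>+z. ?h2 (0 + (-1) * z) \<partial>lborel)"
    using nn_integral_real_affine[of ?h2 "-1" 0] by simp
  also have "\<dots> = (\<integral>\<^sup>+z. ennreal (a * z powr (-2*a-1)) * indicator {1..} z * f (-z) \<partial>lborel)"
    by (intro nn_integral_cong) (auto split: split_indicator)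
  also have "(\<integral>\<^sup>+z. ?h1 z \<partial>lborel) + \<dots> =
     (\<integral>\<^sup>+z. ?h1 z + ennreal (a * z powr (-2*a-1)) * indicator {1..} z * f (-z) \<partial>lborel)"
    by (rule nn_integral_add[symmetric]) auto
  also have "\<dots> = (\<integral>\<^sup>+z. ennreal (a * z powr (-2*a-1)) * indicator {1..} z * (f z + f (-z)) \<partial>lborel)"
    by (intro nn_integral_cong) (simp add: distrib_left)
  finally show ?thesis .
qed

lemma nn_integral_sym_pareto_uminus:
  assumes [measurable]: "f \<in> borel_measurable borel"
  shows "(\<integral>\<^sup>+z. f (-z) \<partial>sym_pareto a) = (\<integral>\<^sup>+z. f z \<partial>sym_pareto a)"
  by (simp add: nn_integral_sym_pareto add.commute)

lemma nn_integral_pareto_density: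
  assumes "a > 0"
  shows "(\<integral>\<^sup>+z. ennreal (a * z powr (-2*a-1)) * indicator {1..} z \<partial>lborel) = ennreal (1/2)"
proof -
  have "(\<integral>\<^sup>+z. ennreal (a * z powr (-2*a-1)) * indicator {1..} z \<partial>lborel)
      = ennreal (0 - (- (1 powr (-2*a) / 2)))"
  proof (rule nn_integral_FTC_atLeast)
    fix x :: real assume "1 \<le> x"
    then show "0 \<le> a * x powr (-2*a-1)"
      and "((\<lambda>z. - (z powr (-2*a) / 2)) has_real_derivative a * x powr (-2*a-1)) (at x)"
      using assms by (auto intro!: derivative_eq_intros simp: field_simps powr_diff)
  next
    have "((\<lambda>z. z powr (-2*a)) \<longlongrightarrow> 0) at_top"
      using tendsto_neg_powr[of "-2*a" "\<lambda>x. x" at_top] assms filterlim_ident by auto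
    then show "((\<lambda>z. - (z powr (-2*a) / 2)) \<longlongrightarrow> 0) at_top"
      by (auto intro: tendsto_minus_cancel_left[THEN iffD1] simp: tendsto_divide_zero)
  qed simp
  then show ?thesis by simp
qed

lemma borel_prob_sym_pareto:
  assumes "a > 0"
  shows "borel_prob (sym_pareto a)"
  unfolding borel_prob_def
proof (intro conjI prob_spaceI)
  have "emeasure (sym_pareto a) UNIV = (\<integral>\<^sup>+z. indicator UNIV z \<partial>sym_pareto a)"
    by (subst nn_integral_indicator) auto
  also have "\<dots> = (\<integral>\<^sup>+z. ennreal (a * z powr (-2*a-1)) * indicator {1..} z * 2 \<partial>lborel)"
    by (subst nn_integral_sym_pareto) (auto simp: one_add_one)
  also have "\<dots> = (\<integral>\<^sup>+z. ennreal (a * z powr (-2*a-1)) * indicator {1..} z \<partial>lborel) * 2"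
    by (rule nn_integral_multc) auto
  also have "\<dots> = ennreal (1/2) * 2"
    by (simp only: nn_integral_pareto_density[OF assms])
  also have "\<dots> = 1"
    using ennreal_half_times_2[of 1] by simp
  finally show "emeasure (sym_pareto a) (space (sym_pareto a)) = 1"
    using sets_eq_imp_space_eq[OF sets_sym_pareto[of a]] by simp
qed simp

lemma emeasure_sym_pareto_singleton: "emeasure (sym_pareto a) {p} = 0"
  unfolding sym_pareto_def by (subst emeasure_density) auto

lemma sets_dil [simp, measurable_cong]: "sets (dil c N) = sets borel"
  by (simp add: dil_def)

lemma nn_integral_dil:
  assumes "f \<in> borel_measurable borel" and "sets N = sets borel"
  shows "(\<integral>\<^sup>+z. f z \<partial>dil c N) = (\<integral>\<^sup>+z. f (c * z) \<partial>N)"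
  using assms unfolding dil_def by (subst nn_integral_distr) (auto cong: measurable_cong_sets)

lemma measure_dil:
  assumes "A \<in> sets borel" and "sets N = sets borel"
  shows "measure (dil c N) A = measure N {z. c * z \<in> A}"
  using assms sets_eq_imp_space_eq[OF assms(2)] unfolding dil_def
  by (subst measure_distr) (auto cong: measurable_cong_sets simp: vimage_def)

lemma borel_prob_dil: "borel_prob N \<Longrightarrow> borel_prob (dil c N)"
  unfolding borel_prob_def dil_def
  by (auto intro: prob_space.prob_space_distr cong: measurable_cong_sets)

lemma measure_dil_tdelta:
  assumes [measurable]: "A \<in> sets borel"
  shows "measure (dil c (tdelta 1)) A = (indicator A c + indicator A (-c)) / 2"
proof -
  have "{z. c * z \<in> A} \<in> sets borel" by measurable
  then show ?thesis
    by (simp add: measure_dil measure_tdelta split: split_indicator)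
qed

lemma measurable_measure_dil_sym_pareto:
  assumes "a > 0" and [measurable]: "A \<in> sets borel"
  shows "(\<lambda>c. measure (dil c (sym_pareto a)) A) \<in> borel_measurable borel"
proof -
  interpret P: prob_space "sym_pareto a"
    using borel_prob_sym_pareto[OF assms(1)] by (simp add: borel_prob_def)
  define Q where "Q = {p \<in> space (borel \<Otimes>\<^sub>M sym_pareto a). fst p * snd p \<in> A}"
  have "Q \<in> sets (borel \<Otimes>\<^sub>M sym_pareto a)"
    unfolding Q_def by measurable
  then have "(\<lambda>c. enn2real (emeasure (sym_pareto a) (Pair c -` Q))) \<in> borel_measurable borel"
    using P.measurable_emeasure_Pair by measurable
  moreover have "Pair c -` Q = {z. c * z \<in> A}" for c
    unfolding Q_def using sets_eq_imp_space_eq[OF sets_sym_pareto[of a]]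
    by (auto simp: space_pair_measure)
  ultimately show ?thesis
    unfolding measure_dil[OF assms(2) sets_sym_pareto] by (simp add: measure_def)
qed

section \<open>The Kendall convolution of two symmetrized Dirac measures\<close>

definition kmax :: "real \<Rightarrow> real \<Rightarrow> real" where
  "kmax x y = max \<bar>x\<bar> \<bar>y\<bar>"

definition kratio :: "real \<Rightarrow> real \<Rightarrow> real \<Rightarrow> real" where
  "kratio a x y = (if kmax x y = 0 then 0 else min \<bar>x\<bar> \<bar>y\<bar> / kmax x y) powr a"

lemma kbase_eq_kratio:
  "kbase a x y A = kratio a x y * measure (dil (kmax x y) (sym_pareto a)) A
     + (1 - kratio a x y) * measure (dil (kmax x y) (tdelta 1)) A"
  unfolding kbase_def kmax_def kratio_def Let_def by (cases "max \<bar>x\<bar> \<bar>y\<bar> = 0") auto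

lemma kmax_nonneg: "0 \<le> kmax x y"
  by (simp add: kmax_def)

lemma kratio_nonneg: "0 \<le> kratio a x y"
  by (simp add: kratio_def)

lemma kratio_le_1: "a > 0 \<Longrightarrow> kratio a x y \<le> 1"
  unfolding kratio_def kmax_def by (auto intro!: powr_le1 simp: divide_le_eq_1)

definition kendall_kernel :: "real \<Rightarrow> real \<Rightarrow> real \<Rightarrow> real measure" where
  "kendall_kernel a x y = measure_pmf (bernoulli_pmf (kratio a x y)) \<bind>
     (\<lambda>b. if b then dil (kmax x y) (sym_pareto a) else dil (kmax x y) (tdelta 1))"

lemma measurable_kendall_kernel_choice:
  assumes "a > 0"
  shows "(\<lambda>b. if b then dil c (sym_pareto a) else dil c (tdelta 1))
    \<in> measurable (measure_pmf p) (subprob_algebra borel)"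
  using borel_prob_dil[OF borel_prob_sym_pareto[OF assms]] borel_prob_dil[OF borel_prob_tdelta]
  by (auto simp: space_subprob_algebra borel_prob_def intro!: prob_space_imp_subprob_space
           split: if_splits)

lemma sets_kendall_kernel [simp, measurable_cong]:
  "a > 0 \<Longrightarrow> sets (kendall_kernel a x y) = sets borel"
  unfolding kendall_kernel_def by (subst sets_bind) auto

lemma nn_integral_kendall_kernel_mixture:
  assumes "a > 0" and [measurable]: "f \<in> borel_measurable borel"
  shows "(\<integral>\<^sup>+z. f z \<partial>kendall_kernel a x y)
    = ennreal (kratio a x y) * (\<integral>\<^sup>+z. f z \<partial>dil (kmax x y) (sym_pareto a))
      + ennreal (1 - kratio a x y) * (\<integral>\<^sup>+z. f z \<partial>dil (kmax x y) (tdelta 1))"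
  unfolding kendall_kernel_def
  using kratio_nonneg[of a x y] kratio_le_1[OF assms(1), of x y]
  by (simp add: nn_integral_bind[OF _ measurable_kendall_kernel_choice[OF assms(1)]]
                nn_integral_measure_pmf_support[of UNIV] UNIV_bool algebra_simps)

lemma nn_integral_kendall_kernel:
  assumes "a > 0" and [measurable]: "f \<in> borel_measurable borel"
  shows "(\<integral>\<^sup>+z. f z \<partial>kendall_kernel a x y)
    = ennreal (kratio a x y) * (\<integral>\<^sup>+z. f (kmax x y * z) \<partial>sym_pareto a)
      + ennreal (1 - kratio a x y) * ((f (kmax x y) + f (- kmax x y)) / 2)"
  by (simp add: nn_integral_kendall_kernel_mixture[OF assms] nn_integral_dil nn_integral_tdelta)

lemma emeasure_kendall_kernel:
  assumes "a > 0" and "A \<in> sets borel"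
  shows "emeasure (kendall_kernel a x y) A = ennreal (kbase a x y A)"
proof -
  let ?P = "dil (kmax x y) (sym_pareto a)" and ?D = "dil (kmax x y) (tdelta 1)"
  interpret P: prob_space ?P
    using borel_prob_dil[OF borel_prob_sym_pareto[OF assms(1)]] by (simp add: borel_prob_def)
  interpret D: prob_space ?D
    using borel_prob_dil[OF borel_prob_tdelta] by (simp add: borel_prob_def)
  have "emeasure (kendall_kernel a x y) A = (\<integral>\<^sup>+z. indicator A z \<partial>kendall_kernel a x y)"
    using assms by simp
  also have "\<dots> = ennreal (kratio a x y) * emeasure ?P A + ennreal (1 - kratio a x y) * emeasure ?D A"
    using assms by (subst nn_integral_kendall_kernel_mixture) auto
  also have "\<dots> = ennreal (kratio a x y) * ennreal (measure ?P A)
      + ennreal (1 - kratio a x y) * ennreal (measure ?D A)"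
    by (simp add: P.emeasure_eq_measure D.emeasure_eq_measure)
  also have "\<dots> = ennreal (kbase a x y A)"
    unfolding kbase_eq_kratio by (intro ennreal_mixture) (simp_all add: kratio_nonneg kratio_le_1 assms(1))
  finally show ?thesis .
qed

lemma borel_prob_kendall_kernel:
  assumes "a > 0"
  shows "borel_prob (kendall_kernel a x y)"
  unfolding borel_prob_def
proof (intro conjI prob_spaceI)
  have "prob_space (dil (kmax x y) (sym_pareto a))" "prob_space (dil (kmax x y) (tdelta 1))"
    using borel_prob_dil[OF borel_prob_sym_pareto[OF assms]] borel_prob_dil[OF borel_prob_tdelta]
    by (auto simp: borel_prob_def)
  then have "measure (dil (kmax x y) (sym_pareto a)) UNIV = 1" "measure (dil (kmax x y) (tdelta 1)) UNIV = 1"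
    by (metis prob_space.prob_space sets_dil sets_eq_imp_space_eq space_borel)+
  then show "emeasure (kendall_kernel a x y) (space (kendall_kernel a x y)) = 1"
    using sets_eq_imp_space_eq[OF sets_kendall_kernel[OF assms]]
    by (simp add: emeasure_kendall_kernel[OF assms] kbase_eq_kratio)
qed (simp add: assms)

lemma measurable_kbase:
  assumes "a > 0" and [measurable]: "A \<in> sets borel"
  shows "(\<lambda>p. kbase a (fst p) (snd p) A) \<in> borel_measurable (borel \<Otimes>\<^sub>M borel)"
proof -
  have [measurable]: "(\<lambda>p. kmax (fst p) (snd p)) \<in> borel_measurable (borel \<Otimes>\<^sub>M borel)"
    unfolding kmax_def by measurable
  have "(\<lambda>p. kratio a (fst p) (snd p)) \<in> borel_measurable (borel \<Otimes>\<^sub>M borel)"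
    unfolding kratio_def by measurable
  moreover have "(\<lambda>p. measure (dil (kmax (fst p) (snd p)) (sym_pareto a)) A)
      \<in> borel_measurable (borel \<Otimes>\<^sub>M borel)"
    using measurable_measure_dil_sym_pareto[OF assms] by measurable
  ultimately show ?thesis
    unfolding kbase_eq_kratio measure_dil_tdelta[OF assms(2)] by measurable
qed

lemma measurable_kendall_kernel:
  assumes "a > 0" and "sets M = sets (borel \<Otimes>\<^sub>M borel)"
  shows "(\<lambda>p. kendall_kernel a (fst p) (snd p)) \<in> measurable M (subprob_algebra borel)"
proof (rule measurable_subprob_algebra)
  fix p :: "real \<times> real"
  show "subprob_space (kendall_kernel a (fst p) (snd p))"
    using borel_prob_kendall_kernel[OF assms(1)] by (simp add: borel_prob_def prob_space_imp_subprob_space)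
next
  fix A :: "real set" assume "A \<in> sets borel"
  then show "(\<lambda>p. emeasure (kendall_kernel a (fst p) (snd p)) A) \<in> borel_measurable M"
    using measurable_kbase[OF assms(1)] assms(2)
    by (simp add: emeasure_kendall_kernel[OF assms(1)] cong: measurable_cong_sets)
qed (simp add: assms(1))

lemma sets_pair_borel_prob:
  "borel_prob \<mu>1 \<Longrightarrow> borel_prob \<mu>2 \<Longrightarrow> sets (\<mu>1 \<Otimes>\<^sub>M \<mu>2) = sets (borel \<Otimes>\<^sub>M borel)"
  by (intro sets_pair_measure_cong) (auto simp: borel_prob_def)

lemma kconv_eq_bind:
  assumes "a > 0" and "borel_prob \<mu>1" and "borel_prob \<mu>2"
  shows "kconv a \<mu>1 \<mu>2 = (\<mu>1 \<Otimes>\<^sub>M \<mu>2) \<bind> (\<lambda>p. kendall_kernel a (fst p) (snd p))"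
  unfolding kconv_def
proof (rule measure_of_borel_eqI)
  interpret P2: prob_space \<mu>2
    using assms(3) by (simp add: borel_prob_def)
  note kernel = measurable_kendall_kernel[OF assms(1) sets_pair_borel_prob[OF assms(2,3)]]
  have ne: "space (\<mu>1 \<Otimes>\<^sub>M \<mu>2) \<noteq> {}"
    using assms(2,3) by (simp add: space_pair_measure space_borel_prob)
  then show "sets ((\<mu>1 \<Otimes>\<^sub>M \<mu>2) \<bind> (\<lambda>p. kendall_kernel a (fst p) (snd p))) = sets borel"
    by (subst sets_bind) (auto simp: assms(1))
  fix A :: "real set" assume A: "A \<in> sets borel"
  have "emeasure ((\<mu>1 \<Otimes>\<^sub>M \<mu>2) \<bind> (\<lambda>p. kendall_kernel a (fst p) (snd p))) A
      = (\<integral>\<^sup>+p. emeasure (kendall_kernel a (fst p) (snd p)) A \<partial>(\<mu>1 \<Otimes>\<^sub>M \<mu>2))"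
    by (rule emeasure_bind[OF ne kernel A])
  also have "\<dots> = (\<integral>\<^sup>+x. \<integral>\<^sup>+y. emeasure (kendall_kernel a x y) A \<partial>\<mu>2 \<partial>\<mu>1)"
    using P2.nn_integral_fst[OF measurable_emeasure_kernel[OF kernel A]] by simp
  finally show "(\<integral>\<^sup>+x. \<integral>\<^sup>+y. ennreal (kbase a x y A) \<partial>\<mu>2 \<partial>\<mu>1)
      = emeasure ((\<mu>1 \<Otimes>\<^sub>M \<mu>2) \<bind> (\<lambda>p. kendall_kernel a (fst p) (snd p))) A"
    by (simp add: emeasure_kendall_kernel[OF assms(1) A])
qed

lemma nn_integral_kconv:
  assumes "a > 0" and "borel_prob \<mu>1" and "borel_prob \<mu>2"
    and f [measurable]: "f \<in> borel_measurable borel"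
  shows "(\<integral>\<^sup>+z. f z \<partial>kconv a \<mu>1 \<mu>2) = (\<integral>\<^sup>+x. \<integral>\<^sup>+y. \<integral>\<^sup>+z. f z \<partial>kendall_kernel a x y \<partial>\<mu>2 \<partial>\<mu>1)"
proof -
  interpret P2: prob_space \<mu>2
    using assms(3) by (simp add: borel_prob_def)
  note kernel = measurable_kendall_kernel[OF assms(1) sets_pair_borel_prob[OF assms(2,3)]]
  have "(\<lambda>p. \<integral>\<^sup>+z. f z \<partial>kendall_kernel a (fst p) (snd p)) \<in> borel_measurable (\<mu>1 \<Otimes>\<^sub>M \<mu>2)"
    using measurable_compose[OF kernel nn_integral_measurable_subprob_algebra[OF f]] by simp
  from P2.nn_integral_fst[OF this] show ?thesis
    unfolding kconv_eq_bind[OF assms(1-3)] nn_integral_bind[OF f kernel] by simp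
qed

lemma emeasure_kconv:
  assumes "a > 0" and "borel_prob \<mu>1" and "borel_prob \<mu>2" and "A \<in> sets borel"
  shows "emeasure (kconv a \<mu>1 \<mu>2) A = (\<integral>\<^sup>+x. \<integral>\<^sup>+y. emeasure (kendall_kernel a x y) A \<partial>\<mu>2 \<partial>\<mu>1)"
proof -
  have "sets (kconv a \<mu>1 \<mu>2) = sets borel"
    unfolding kconv_def using sets.sigma_sets_eq[of "borel::real measure"] by simp
  then show ?thesis
    using nn_integral_kconv[OF assms(1-3), of "indicator A"] assms(1,4) by simp
qed

lemma borel_prob_kconv:
  assumes "a > 0" and "borel_prob \<mu>1" and "borel_prob \<mu>2"
  shows "borel_prob (kconv a \<mu>1 \<mu>2)"
proof -
  interpret P1: prob_space \<mu>1 using assms(2) by (simp add: borel_prob_def)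
  interpret P2: prob_space \<mu>2 using assms(3) by (simp add: borel_prob_def)
  have sets: "sets (kconv a \<mu>1 \<mu>2) = sets borel"
    unfolding kconv_def using sets.sigma_sets_eq[of "borel::real measure"] by simp
  have "emeasure (kconv a \<mu>1 \<mu>2) (space (kconv a \<mu>1 \<mu>2)) = (\<integral>\<^sup>+z. 1 \<partial>kconv a \<mu>1 \<mu>2)"
    by simp
  also have "\<dots> = (\<integral>\<^sup>+x. \<integral>\<^sup>+y. \<integral>\<^sup>+z. 1 \<partial>kendall_kernel a x y \<partial>\<mu>2 \<partial>\<mu>1)"
    by (rule nn_integral_kconv[OF assms]) simp
  also have "\<dots> = 1"
    using borel_prob_kendall_kernel[OF assms(1)]
    by (simp add: borel_prob_def prob_space.emeasure_space_1 P1.emeasure_space_1 P2.emeasure_space_1)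
  finally show ?thesis
    unfolding borel_prob_def using sets by (auto intro: prob_spaceI)
qed

lemma borel_prob_kpow: "a > 0 \<Longrightarrow> borel_prob \<nu> \<Longrightarrow> borel_prob (kpow a \<nu> n)"
  by (induction n) (auto simp: borel_prob_tdelta borel_prob_kconv)

definition symmetric_measure :: "real measure \<Rightarrow> bool" where
  "symmetric_measure \<mu> \<longleftrightarrow>
     (\<forall>f \<in> borel_measurable borel. (\<integral>\<^sup>+z. f (-z) \<partial>\<mu>) = (\<integral>\<^sup>+z. f z \<partial>\<mu>))"

lemma symmetric_measure_tdelta: "symmetric_measure (tdelta x)"
  unfolding symmetric_measure_def by (auto simp: nn_integral_tdelta add.commute)

lemma nn_integral_kendall_kernel_uminus:
  assumes "a > 0" and [measurable]: "f \<in> borel_measurable borel"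
  shows "(\<integral>\<^sup>+z. f (-z) \<partial>kendall_kernel a x y) = (\<integral>\<^sup>+z. f z \<partial>kendall_kernel a x y)"
  using nn_integral_sym_pareto_uminus[of "\<lambda>z. f (kmax x y * z)" a]
  by (simp add: nn_integral_kendall_kernel[OF assms(1)] add.commute)

lemma symmetric_measure_kconv:
  assumes "a > 0" and "borel_prob \<mu>1" and "borel_prob \<mu>2"
  shows "symmetric_measure (kconv a \<mu>1 \<mu>2)"
  unfolding symmetric_measure_def
  by (simp add: nn_integral_kconv[OF assms] nn_integral_kendall_kernel_uminus[OF assms(1)])

lemma symmetric_measure_kpow: "a > 0 \<Longrightarrow> borel_prob \<nu> \<Longrightarrow> symmetric_measure (kpow a \<nu> n)"
  by (cases n) (auto simp: symmetric_measure_tdelta symmetric_measure_kconv borel_prob_kpow)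

lemma emeasure_symmetric_measure:
  assumes "symmetric_measure \<mu>" and "sets \<mu> = sets borel" and [measurable]: "A \<in> sets borel"
  shows "emeasure \<mu> (uminus -` A) = emeasure \<mu> A"
proof -
  have "(uminus :: real \<Rightarrow> real) \<in> borel_measurable borel" by measurable
  from measurable_sets[OF this assms(3)] have "uminus -` A \<in> sets borel" by simp
  then have "emeasure \<mu> (uminus -` A) = (\<integral>\<^sup>+z. indicator (uminus -` A) z \<partial>\<mu>)"
    using assms(2) by simp
  also have "\<dots> = (\<integral>\<^sup>+z. indicator A (-z) \<partial>\<mu>)"
    by (simp add: indicator_def)
  also have "\<dots> = (\<integral>\<^sup>+z. indicator A z \<partial>\<mu>)"
    using assms(1) unfolding symmetric_measure_def by simp
  finally show ?thesis
    using assms(2) by simp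
qed

lemma emeasure_kendall_kernel_singleton:
  assumes "a > 0" and "kmax x y \<noteq> \<bar>s\<bar>"
  shows "emeasure (kendall_kernel a x y) {s} = 0"
proof -
  have "(\<integral>\<^sup>+z. indicator {s} (kmax x y * z) \<partial>sym_pareto a) = 0"
  proof (cases "kmax x y = 0")
    case False
    then have "(\<integral>\<^sup>+z. indicator {s} (kmax x y * z) \<partial>sym_pareto a)
        = (\<integral>\<^sup>+z. indicator {s / kmax x y} z \<partial>sym_pareto a)"
      by (intro nn_integral_cong) (auto split: split_indicator simp: field_simps)
    then show ?thesis by (simp add: emeasure_sym_pareto_singleton)
  qed (use assms(2) in simp)
  moreover have "(indicator {s} (kmax x y) + indicator {s} (- kmax x y) :: ennreal) = 0"
    using assms(2) kmax_nonneg[of x y] by (auto split: split_indicator)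
  ultimately show ?thesis
    using nn_integral_kendall_kernel[OF assms(1), of "indicator {s}" x y] assms(1) by simp
qed

lemma AE_not_singleton:
  fixes \<mu> :: "real measure"
  assumes "sets \<mu> = sets borel" and "emeasure \<mu> {s} = 0"
  shows "AE x in \<mu>. x \<noteq> s"
proof -
  have "{s} \<in> null_sets \<mu>"
    using assms by (simp add: null_sets_def)
  from AE_not_in[OF this] show ?thesis by simp
qed

lemma emeasure_kconv_singleton:
  assumes "a > 0" and "borel_prob \<mu>1" and "borel_prob \<mu>2"
    and "emeasure \<mu>1 {s} = 0" and "emeasure \<mu>1 {-s} = 0"
    and "emeasure \<mu>2 {s} = 0" and "emeasure \<mu>2 {-s} = 0"
  shows "emeasure (kconv a \<mu>1 \<mu>2) {s} = 0"
proof -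
  have "AE x in \<mu>. \<bar>x\<bar> \<noteq> \<bar>s\<bar>"
    if "borel_prob \<mu>" "emeasure \<mu> {s} = 0" "emeasure \<mu> {-s} = 0" for \<mu>
  proof -
    have "AE x in \<mu>. x \<noteq> s" "AE x in \<mu>. x \<noteq> -s"
      using that AE_not_singleton[of \<mu>] by (auto simp: borel_prob_def)
    then show ?thesis
      by eventually_elim (auto simp: abs_if)
  qed
  then have ae1: "AE x in \<mu>1. \<bar>x\<bar> \<noteq> \<bar>s\<bar>" and ae2: "AE y in \<mu>2. \<bar>y\<bar> \<noteq> \<bar>s\<bar>"
    using assms(2-7) by auto
  have "AE x in \<mu>1. (\<integral>\<^sup>+y. emeasure (kendall_kernel a x y) {s} \<partial>\<mu>2) = (\<integral>\<^sup>+y. 0 \<partial>\<mu>2)"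
    using ae1
  proof eventually_elim
    case (elim x)
    from ae2 show ?case
      by (intro nn_integral_cong_AE, eventually_elim)
         (use elim in \<open>auto intro!: emeasure_kendall_kernel_singleton[OF assms(1)] simp: kmax_def max_def split: if_splits\<close>)
  qed
  then have "(\<integral>\<^sup>+x. \<integral>\<^sup>+y. emeasure (kendall_kernel a x y) {s} \<partial>\<mu>2 \<partial>\<mu>1) = (\<integral>\<^sup>+x. 0 \<partial>\<mu>1)"
    by (intro nn_integral_cong_AE) simp
  then show ?thesis
    using assms(1-3) by (simp add: emeasure_kconv)
qed

lemma emeasure_kconv_zero:
  assumes "a > 0" and "borel_prob \<mu>1" and "borel_prob \<mu>2" and "emeasure \<mu>2 {0} = 0"
  shows "emeasure (kconv a \<mu>1 \<mu>2) {0} = 0"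
proof -
  have "AE y in \<mu>2. y \<noteq> 0"
    using assms(3,4) AE_not_singleton[of \<mu>2] by (simp add: borel_prob_def)
  then have "(\<integral>\<^sup>+y. emeasure (kendall_kernel a x y) {0} \<partial>\<mu>2) = (\<integral>\<^sup>+y. 0 \<partial>\<mu>2)" for x
    by (intro nn_integral_cong_AE, eventually_elim)
       (auto intro!: emeasure_kendall_kernel_singleton[OF assms(1)] simp: kmax_def)
  then show ?thesis
    using assms(1-3) by (simp add: emeasure_kconv)
qed

lemma emeasure_kpow_singleton:
  assumes "a > 0" and "borel_prob \<nu>" and "s \<noteq> 0"
    and "emeasure \<nu> {s} = 0" and "emeasure \<nu> {-s} = 0"
  shows "emeasure (kpow a \<nu> n) {s} = 0 \<and> emeasure (kpow a \<nu> n) {-s} = 0"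
proof (induction n)
  case 0
  then show ?case
    using assms(3) by (simp add: tdelta_eq_distr emeasure_random_sign)
next
  case (Suc n)
  then show ?case
    using emeasure_kconv_singleton[OF assms(1) borel_prob_kpow[OF assms(1,2)] assms(2), of n s]
      emeasure_kconv_singleton[OF assms(1) borel_prob_kpow[OF assms(1,2)] assms(2), of n "-s"] assms(4,5)
    by simp
qed

lemma emeasure_kpow_zero:
  assumes "a > 0" and "borel_prob \<nu>" and "emeasure \<nu> {0} = 0" and "n \<ge> 1"
  shows "emeasure (kpow a \<nu> n) {0} = 0"
  using assms by (cases n) (auto simp: emeasure_kconv_zero borel_prob_kpow)

lemma Psi_nonneg: "0 \<le> Psi a u"
  by (simp add: Psi_def)

lemma Psi_le_1: "0 \<le> a \<Longrightarrow> Psi a u \<le> 1"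
  by (simp add: Psi_def)

lemma Psi_uminus [simp]: "Psi a (-u) = Psi a u"
  by (simp add: Psi_def)

lemma Psi_0: "a > 0 \<Longrightarrow> Psi a 0 = 1"
  by (simp add: Psi_def)

lemma Psi_eq_0: "a > 0 \<Longrightarrow> 1 \<le> \<bar>u\<bar> \<Longrightarrow> Psi a u = 0"
  unfolding Psi_def using ge_one_powr_ge_zero[of "\<bar>u\<bar>" a] by auto

lemma Psi_eq: "a > 0 \<Longrightarrow> \<bar>u\<bar> \<le> 1 \<Longrightarrow> Psi a u = 1 - \<bar>u\<bar> powr a"
  unfolding Psi_def using powr_le1[of a "\<bar>u\<bar>"] by auto

lemma Psi_divide:
  assumes "a > 0" and "0 \<le> z" and "z \<le> c"
  shows "Psi a (z / c) = 1 - c powr (-a) * z powr a" and "c powr (-a) * z powr a \<le> 1"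
proof -
  have z_c: "0 \<le> z / c" "z / c \<le> 1"
    using assms(2,3) by (auto simp: divide_le_eq_1)
  have "(z / c) powr a = c powr (-a) * z powr a"
    using assms(2,3) by (simp add: powr_divide powr_minus_divide)
  moreover have "Psi a (z / c) = 1 - (z / c) powr a"
    using Psi_eq[OF assms(1), of "z / c"] abs_of_nonneg[OF z_c(1)] z_c(2) by metis
  moreover have "(z / c) powr a \<le> 1"
    using z_c assms(1) by (intro powr_le1) auto
  ultimately show "Psi a (z / c) = 1 - c powr (-a) * z powr a" and "c powr (-a) * z powr a \<le> 1"
    by simp_all
qed

lemma borel_measurable_Psi [measurable]:
  assumes [measurable]: "f \<in> borel_measurable M"
  shows "(\<lambda>z. Psi a (f z)) \<in> borel_measurable M"
  unfolding Psi_def by measurable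

lemma nn_integral_pareto_density_Icc:
  assumes "a > 0" and "1 \<le> c"
  shows "(\<integral>\<^sup>+z. ennreal (a * z powr (-2*a-1)) * indicator {1..c} z \<partial>lborel)
    = ennreal ((1 - c powr (-2*a)) / 2)"
proof -
  have "(\<integral>\<^sup>+z. ennreal (a * z powr (-2*a-1)) * indicator {1..c} z \<partial>lborel)
      = ennreal (- (c powr (-2*a) / 2) - - (1 powr (-2*a) / 2))"
  proof (rule nn_integral_FTC_Icc)
    fix z :: real assume "z \<in> {1..c}"
    then show "((\<lambda>z. - (z powr (-2*a) / 2)) has_real_derivative a * z powr (-2*a-1)) (at z)"
      and "0 \<le> a * z powr (-2*a-1)"
      using assms(1) by (auto intro!: derivative_eq_intros simp: field_simps powr_diff)
  qed (use assms(2) in auto)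
  then show ?thesis by (simp add: diff_divide_distrib)
qed

lemma nn_integral_pareto_density_Psi:
  assumes "a > 0" and "1 \<le> c"
  shows "(\<integral>\<^sup>+z. ennreal (a * z powr (-2*a-1) * Psi a (z / c)) * indicator {1..} z \<partial>lborel)
    = ennreal ((1 - c powr (-a))^2 / 2)"
proof -
  let ?k = "c powr (-a)"
  let ?h = "\<lambda>z. a * z powr (-2*a-1) - a * ?k * z powr (-a-1)"
  let ?F = "\<lambda>z. - (z powr (-2*a) / 2) + ?k * z powr (-a)"
  have powr_shift: "z powr (-a-1) = z powr a * z powr (-2*a-1)" for z :: real
    by (simp add: powr_add[symmetric])
  have Psi_Icc: "Psi a (z / c) = 1 - ?k * z powr a" and k_bound: "?k * z powr a \<le> 1"
    if "z \<in> {1..c}" for z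
    using Psi_divide[OF assms(1), of z c] that by auto
  have integrand: "ennreal (a * z powr (-2*a-1) * Psi a (z / c)) * indicator {1..} z
      = ennreal (?h z) * indicator {1..c} z" for z
  proof (cases "z \<in> {1..c}")
    case True
    then show ?thesis
      by (simp add: Psi_Icc powr_shift algebra_simps)
  next
    case False
    then show ?thesis
      using assms Psi_eq_0[OF assms(1), of "z / c"] by (auto split: split_indicator simp: field_simps)
  qed
  have "(\<integral>\<^sup>+z. ennreal (a * z powr (-2*a-1) * Psi a (z / c)) * indicator {1..} z \<partial>lborel)
      = (\<integral>\<^sup>+z. ennreal (?h z) * indicator {1..c} z \<partial>lborel)"
    by (rule nn_integral_cong) (rule integrand)
  also have "\<dots> = ennreal (?F c - ?F 1)"
  proof (rule nn_integral_FTC_Icc)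
    fix z :: real assume z: "z \<in> {1..c}"
    then show "(?F has_real_derivative ?h z) (at z)"
      by (auto intro!: derivative_eq_intros simp: field_simps powr_diff)
    have "a * ?k * z powr (-a-1) = a * (?k * z powr a) * z powr (-2*a-1)"
      by (simp add: powr_shift)
    also have "\<dots> \<le> a * z powr (-2*a-1)"
    proof -
      have "?k * z powr a * z powr (-2*a-1) \<le> 1 * z powr (-2*a-1)"
        by (rule mult_right_mono[OF k_bound[OF z]]) simp
      from mult_left_mono[OF this, of a] show ?thesis
        using assms(1) by (simp add: mult.assoc)
    qed
    finally show "0 \<le> ?h z" by simp
  qed (use assms(2) in auto)
  also have "?F c - ?F 1 = (1 - ?k)^2 / 2"
    using assms(2) by (simp add: power2_eq_square algebra_simps powr_add[symmetric])
  finally show ?thesis .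
qed

lemma nn_integral_sym_pareto_Psi:
  assumes "a > 0" and "t > 0" and "M > 0"
  shows "(\<integral>\<^sup>+z. ennreal (Psi a (M * z / t)) \<partial>sym_pareto a)
    = ennreal (if M < t then (1 - (M / t) powr a)^2 else 0)"
proof -
  have "(\<integral>\<^sup>+z. ennreal (Psi a (M * z / t)) \<partial>sym_pareto a)
      = (\<integral>\<^sup>+z. ennreal (a * z powr (-2*a-1) * Psi a (z / (t / M))) * indicator {1..} z * 2 \<partial>lborel)"
    using assms
    by (subst nn_integral_sym_pareto)
       (auto intro!: nn_integral_cong simp: ennreal_mult Psi_nonneg mult_2_right[symmetric] mult_ac)
  also have "\<dots> = ennreal (if M < t then (1 - (M / t) powr a)^2 else 0)"
  proof (cases "M < t")
    case True
    then have c: "1 \<le> t / M"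
      using assms by simp
    have k: "(t / M) powr (-a) = (M / t) powr a"
      using assms by (simp add: powr_minus_divide powr_divide)
    have "(\<integral>\<^sup>+z. ennreal (a * z powr (-2*a-1) * Psi a (z / (t / M))) * indicator {1..} z * 2 \<partial>lborel)
        = (\<integral>\<^sup>+z. ennreal (a * z powr (-2*a-1) * Psi a (z / (t / M))) * indicator {1..} z \<partial>lborel) * 2"
      by (rule nn_integral_multc) measurable
    also have "\<dots> = ennreal ((1 - (M / t) powr a)^2 / 2) * 2"
      by (simp only: nn_integral_pareto_density_Psi[OF assms(1) c] k)
    finally show ?thesis
      using True by (simp add: ennreal_half_times_2)
  next
    case False
    have "Psi a (z / (t / M)) = 0" if "1 \<le> z" for z
    proof -
      have "t \<le> M * z"
        using False that assms(3) by (metis mult_le_cancel_left1 not_le order_trans less_imp_le)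
      then show ?thesis
        using assms by (intro Psi_eq_0) (auto simp: field_simps)
    qed
    then show ?thesis
      using False by (auto intro!: nn_integral_zero' split: split_indicator)
  qed
  finally show ?thesis .
qed

lemma nn_integral_sym_pareto_interval:
  assumes "a > 0" and "t > 0" and "M > 0"
  shows "(\<integral>\<^sup>+z. indicator {0<..<t} (M * z) \<partial>sym_pareto a)
    = ennreal (if M < t then (1 - ((M / t) powr a)^2) / 2 else 0)"
proof -
  have "(\<integral>\<^sup>+z. indicator {0<..<t} (M * z) \<partial>sym_pareto a)
      = (\<integral>\<^sup>+z. ennreal (a * z powr (-2*a-1)) * indicator {1..<t / M} z \<partial>lborel)"
    using assms
    by (subst nn_integral_sym_pareto)
       (auto intro!: nn_integral_cong split: split_indicator simp: field_simps mult_less_0_iff)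
  also have "\<dots> = (\<integral>\<^sup>+z. ennreal (a * z powr (-2*a-1)) * indicator {1..t / M} z \<partial>lborel)"
    by (intro nn_integral_cong_AE, use AE_lborel_singleton[of "t / M"] in eventually_elim)
       (auto split: split_indicator)
  also have "\<dots> = ennreal (if M < t then (1 - ((M / t) powr a)^2) / 2 else 0)"
  proof (cases "M < t")
    case True
    then have c: "1 \<le> t / M"
      using assms by simp
    have k: "(t / M) powr (-2*a) = ((M / t) powr a)^2"
      using assms by (simp add: powr_minus_divide powr_divide power2_eq_square powr_add[symmetric])
    show ?thesis
      using True by (simp only: nn_integral_pareto_density_Icc[OF assms(1) c] k if_True)
  next
    case False
    then have "t / M \<le> 1"
      using assms by (simp add: field_simps)
    then have ind: "indicator {1..t / M} z = (0::ennreal)" if "z \<noteq> 1" for z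
      using that by (auto split: split_indicator)
    have "AE z in lborel. ennreal (a * z powr (-2*a-1)) * indicator {1..t / M} z = 0"
      using AE_lborel_singleton[of 1] by eventually_elim (simp add: ind)
    then show ?thesis
      using False by (simp add: nn_integral_0_iff_AE)
  qed
  finally show ?thesis .
qed

section \<open>The Williamson transform is multiplicative\<close>

text \<open>With \<open>k = (M/t)\<^sup>\<alpha>\<close> the left-hand side factors as \<open>(1 - k) (1 - \<rho>\<^sup>\<alpha> k)\<close>, and \<open>\<rho>\<^sup>\<alpha> k = (m/t)\<^sup>\<alpha>\<close>.\<close>

lemma kendall_kernel_Psi_identity:
  assumes "a > 0" and "t > 0" and "kmax x y > 0"
  shows "kratio a x y * (if kmax x y < t then (1 - (kmax x y / t) powr a)^2 else 0)
      + (1 - kratio a x y) * Psi a (kmax x y / t) = Psi a (x / t) * Psi a (y / t)"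
proof (cases "kmax x y < t")
  case False
  then have "Psi a (kmax x y / t) = 0"
    using assms by (intro Psi_eq_0) (simp_all add: abs_divide le_divide_eq_1_pos)
  moreover have "1 \<le> \<bar>x / t\<bar> \<or> 1 \<le> \<bar>y / t\<bar>"
    using False assms(2) unfolding kmax_def by (auto simp: field_simps max_def split: if_splits)
  then have "Psi a (x / t) * Psi a (y / t) = 0"
    using Psi_eq_0[OF assms(1)] by auto
  ultimately show ?thesis
    using False by simp
next
  case True
  let ?M = "kmax x y" and ?m = "min \<bar>x\<bar> \<bar>y\<bar>"
  define k where "k = (?M / t) powr a"
  define r where "r = kratio a x y"
  have "r * k = (?m / t) powr a"
    unfolding r_def kratio_def k_def using assms(2,3) by (simp add: powr_mult[symmetric])
  moreover have "\<bar>x\<bar> < t" "\<bar>y\<bar> < t"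
    using True unfolding kmax_def by auto
  then have "Psi a (x / t) = 1 - (\<bar>x\<bar> / t) powr a" "Psi a (y / t) = 1 - (\<bar>y\<bar> / t) powr a"
    using Psi_eq[OF assms(1)] assms(2) by (simp_all add: abs_divide)
  moreover have "Psi a (?M / t) = 1 - k"
    unfolding k_def using Psi_eq[OF assms(1), of "?M / t"] True assms(2,3) by simp
  moreover have "r * (1 - k)^2 + (1 - r) * (1 - k) = (1 - k) * (1 - r * k)"
    by (simp add: algebra_simps power2_eq_square)
  ultimately show ?thesis
    using True unfolding r_def k_def kmax_def by (cases "\<bar>x\<bar> \<le> \<bar>y\<bar>") (auto simp: max_def min_def)
qed

lemma nn_integral_kendall_kernel_Psi:
  assumes "a > 0" and "t > 0"
  shows "(\<integral>\<^sup>+z. ennreal (Psi a (z / t)) \<partial>kendall_kernel a x y) = ennreal (Psi a (x / t) * Psi a (y / t))"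
proof (cases "kmax x y = 0")
  case True
  then have "x = 0" "y = 0" "kratio a x y = 0"
    by (auto simp: kmax_def kratio_def max_def split: if_splits)
  then show ?thesis
    using assms True by (simp add: nn_integral_kendall_kernel Psi_0)
next
  case False
  then have M: "kmax x y > 0"
    using kmax_nonneg[of x y] by simp
  let ?q = "if kmax x y < t then (1 - (kmax x y / t) powr a)^2 else 0"
  have "(\<integral>\<^sup>+z. ennreal (Psi a (z / t)) \<partial>kendall_kernel a x y)
      = ennreal (kratio a x y) * ennreal ?q + ennreal (1 - kratio a x y) * ennreal (Psi a (kmax x y / t))"
    using assms by (simp add: nn_integral_kendall_kernel nn_integral_sym_pareto_Psi[OF assms M]
                              ennreal_add_self_half)
  also have "\<dots> = ennreal (kratio a x y * ?q + (1 - kratio a x y) * Psi a (kmax x y / t))"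
    by (intro ennreal_mixture) (simp_all add: kratio_nonneg kratio_le_1 assms(1) Psi_nonneg)
  finally show ?thesis
    by (simp only: kendall_kernel_Psi_identity[OF assms M])
qed

lemma nn_integral_kconv_Psi:
  assumes "a > 0" and "t > 0" and "borel_prob \<mu>1" and "borel_prob \<mu>2"
  shows "(\<integral>\<^sup>+z. ennreal (Psi a (z / t)) \<partial>kconv a \<mu>1 \<mu>2)
    = (\<integral>\<^sup>+x. ennreal (Psi a (x / t)) \<partial>\<mu>1) * (\<integral>\<^sup>+y. ennreal (Psi a (y / t)) \<partial>\<mu>2)"
proof -
  have [measurable]: "(\<lambda>y. ennreal (Psi a (y / t))) \<in> borel_measurable \<mu>" if "borel_prob \<mu>" for \<mu>
    using that by (rule borel_measurable_borel_prob) measurable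
  have "(\<integral>\<^sup>+z. ennreal (Psi a (z / t)) \<partial>kconv a \<mu>1 \<mu>2)
      = (\<integral>\<^sup>+x. \<integral>\<^sup>+y. ennreal (Psi a (x / t)) * ennreal (Psi a (y / t)) \<partial>\<mu>2 \<partial>\<mu>1)"
    using assms by (simp add: nn_integral_kconv nn_integral_kendall_kernel_Psi ennreal_mult Psi_nonneg)
  also have "\<dots> = (\<integral>\<^sup>+x. ennreal (Psi a (x / t)) * (\<integral>\<^sup>+y. ennreal (Psi a (y / t)) \<partial>\<mu>2) \<partial>\<mu>1)"
    using assms(4) by (simp add: nn_integral_cmult)
  also have "\<dots> = (\<integral>\<^sup>+x. ennreal (Psi a (x / t)) \<partial>\<mu>1) * (\<integral>\<^sup>+y. ennreal (Psi a (y / t)) \<partial>\<mu>2)"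
    using assms(3) by (simp add: nn_integral_multc)
  finally show ?thesis .
qed

lemma nn_integral_kpow_Psi:
  assumes "a > 0" and "t > 0" and "borel_prob \<nu>"
  shows "(\<integral>\<^sup>+z. ennreal (Psi a (z / t)) \<partial>kpow a \<nu> n) = (\<integral>\<^sup>+y. ennreal (Psi a (y / t)) \<partial>\<nu>) ^ n"
proof (induction n)
  case 0
  then show ?case
    using assms(1) by (simp add: nn_integral_tdelta Psi_0)
next
  case (Suc n)
  then show ?case
    using assms by (simp add: nn_integral_kconv_Psi borel_prob_kpow mult.commute)
qed

lemma integral_kpow_Psi:
  assumes "a > 0" and "t > 0" and "borel_prob \<nu>"
  shows "(\<integral>y. Psi a (y / t) \<partial>kpow a \<nu> n) = Gfun a \<nu> t ^ n"
  using assms borel_prob_kpow[OF assms(1,3), of n]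
  by (simp add: Gfun_def integral_eq_nn_integral Psi_nonneg borel_measurable_borel_prob
                nn_integral_kpow_Psi enn2real_power)

section \<open>Mass of the interval (0, t)\<close>

text \<open>The kernel at \<open>x = y = 0\<close> is the Dirac measure at 0, which gives \<open>(0,t)\<close> no mass.\<close>

definition interval_mass :: "real \<Rightarrow> real \<Rightarrow> real \<Rightarrow> real \<Rightarrow> real" where
  "interval_mass a t x y = (if \<bar>x\<bar> < t \<and> \<bar>y\<bar> < t \<and> (x \<noteq> 0 \<or> y \<noteq> 0)
     then (1 - (\<bar>x\<bar> / t) powr a * (\<bar>y\<bar> / t) powr a) / 2 else 0)"

lemma kendall_kernel_interval_identity:
  assumes "a > 0" and "t > 0" and "kmax x y > 0"
  shows "kratio a x y * (if kmax x y < t then (1 - ((kmax x y / t) powr a)^2) / 2 else 0)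
      + (1 - kratio a x y) * (if kmax x y < t then 1/2 else 0) = interval_mass a t x y"
proof (cases "kmax x y < t")
  case True
  have "kratio a x y * (kmax x y / t) powr a = (min \<bar>x\<bar> \<bar>y\<bar> / t) powr a"
    unfolding kratio_def using assms(2,3) by (simp add: powr_mult[symmetric])
  then show ?thesis
    using True assms(3) unfolding interval_mass_def kmax_def
    by (cases "\<bar>x\<bar> \<le> \<bar>y\<bar>") (auto simp: max_def min_def field_simps power2_eq_square)
qed (auto simp: interval_mass_def kmax_def)

lemma emeasure_kendall_kernel_interval:
  assumes "a > 0" and "t > 0"
  shows "emeasure (kendall_kernel a x y) {0<..<t} = ennreal (interval_mass a t x y)"
proof (cases "kmax x y = 0")
  case True
  then have "x = 0" "y = 0" "kratio a x y = 0"
    by (auto simp: kmax_def kratio_def max_def split: if_splits)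
  then show ?thesis
    using assms True by (simp add: nn_integral_kendall_kernel interval_mass_def flip: nn_integral_indicator)
next
  case False
  let ?M = "kmax x y" and ?r = "kratio a x y"
  let ?p = "if ?M < t then (1 - ((?M / t) powr a)^2) / 2 else 0"
  have M: "?M > 0"
    using False kmax_nonneg[of x y] by simp
  have "emeasure (kendall_kernel a x y) {0<..<t}
      = ennreal ?r * (\<integral>\<^sup>+z. indicator {0<..<t} (?M * z) \<partial>sym_pareto a)
        + ennreal (1 - ?r) * ((indicator {0<..<t} ?M + indicator {0<..<t} (- ?M)) / 2)"
    using assms(1) by (simp add: nn_integral_kendall_kernel flip: nn_integral_indicator)
  also have "(indicator {0<..<t} ?M + indicator {0<..<t} (- ?M)) / 2 = ennreal (if ?M < t then 1/2 else 0)"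
    using M divide_ennreal[of 1 2] by (auto simp: indicator_def)
  also have "ennreal ?r * (\<integral>\<^sup>+z. indicator {0<..<t} (?M * z) \<partial>sym_pareto a)
      + ennreal (1 - ?r) * ennreal (if ?M < t then 1/2 else 0)
      = ennreal (?r * ?p + (1 - ?r) * (if ?M < t then 1/2 else 0))"
  proof -
    have "0 \<le> ?p"
      using powr_le1[of a "?M / t"] assms M by (auto simp: power_le_one)
    then show ?thesis
      unfolding nn_integral_sym_pareto_interval[OF assms M]
      by (intro ennreal_mixture) (auto simp: kratio_nonneg kratio_le_1 assms(1))
  qed
  finally show ?thesis
    by (simp only: kendall_kernel_interval_identity[OF assms M])
qed

lemma emeasure_kconv_tdelta_interval:
  assumes "a > 0" and "t > 0" and "borel_prob \<mu>"
  shows "emeasure (kconv a (tdelta x) \<mu>) {0<..<t} = (\<integral>\<^sup>+y. ennreal (interval_mass a t x y) \<partial>\<mu>)"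
proof -
  interpret P: prob_space \<mu>
    using assms(3) by (simp add: borel_prob_def)
  have "(\<lambda>p. ennreal (interval_mass a t (fst p) (snd p))) \<in> borel_measurable (borel \<Otimes>\<^sub>M \<mu>)"
    using assms(3) unfolding interval_mass_def borel_prob_def
    by (simp cong: measurable_cong_sets[OF sets_pair_measure_cong[OF refl]]) measurable
  then have "(\<lambda>x. \<integral>\<^sup>+y. ennreal (interval_mass a t x y) \<partial>\<mu>) \<in> borel_measurable borel"
    using P.borel_measurable_nn_integral by simp
  then have "emeasure (kconv a (tdelta x) \<mu>) {0<..<t}
      = ((\<integral>\<^sup>+y. ennreal (interval_mass a t x y) \<partial>\<mu>) + (\<integral>\<^sup>+y. ennreal (interval_mass a t (-x) y) \<partial>\<mu>)) / 2"
    using assms by (simp add: emeasure_kconv borel_prob_tdelta emeasure_kendall_kernel_interval nn_integral_tdelta)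
  also have "\<dots> = (\<integral>\<^sup>+y. ennreal (interval_mass a t x y) \<partial>\<mu>)"
    unfolding interval_mass_def abs_minus_cancel neg_equal_0_iff_equal by (rule ennreal_add_self_half)
  finally show ?thesis .
qed

lemma interval_mass_eq_Psi:
  assumes "a > 0" and "t > 0" and "\<bar>x\<bar> < t" and "y \<noteq> 0"
  shows "interval_mass a t x y
    = (Psi a (x / t) * indicator {-t<..<t} y + (1 - Psi a (x / t)) * Psi a (y / t)) / 2"
proof -
  have Psi_abs: "Psi a (u / t) = 1 - (\<bar>u\<bar> / t) powr a" if "\<bar>u\<bar> < t" for u
    using Psi_eq[OF assms(1), of "u / t"] that assms(2) by (simp add: abs_divide)
  show ?thesis
  proof (cases "\<bar>y\<bar> < t")
    case True
    then have "indicator {-t<..<t} y = (1::real)"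
      by (auto simp: indicator_def)
    then show ?thesis
      using True assms(3,4) by (simp add: interval_mass_def Psi_abs field_simps)
  next
    case False
    then have "Psi a (y / t) = 0"
      using assms(2) by (intro Psi_eq_0[OF assms(1)]) (simp add: abs_divide)
    moreover have "indicator {-t<..<t} y = (0::real)"
      using False by (auto simp: indicator_def)
    ultimately show ?thesis
      using False by (simp add: interval_mass_def)
  qed
qed

lemma integrable_Psi:
  assumes "a > 0" and "borel_prob \<mu>"
  shows "integrable \<mu> (\<lambda>y. Psi a (y / t))"
proof -
  interpret P: prob_space \<mu>
    using assms(2) by (simp add: borel_prob_def)
  show ?thesis
  proof (rule P.integrable_const_bound[where B=1])
    have "norm (Psi a u) \<le> 1" for u
      using Psi_nonneg[of a u] Psi_le_1[of a u] assms(1) by simp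
    then show "AE y in \<mu>. norm (Psi a (y / t)) \<le> 1"
      by simp
    show "(\<lambda>y. Psi a (y / t)) \<in> borel_measurable \<mu>"
      using assms(2) by (rule borel_measurable_borel_prob) measurable
  qed
qed

lemma measure_kconv_tdelta_interval:
  assumes "a > 0" and "t > 0" and "borel_prob \<mu>" and "emeasure \<mu> {0} = 0"
  shows "measure (kconv a (tdelta x) \<mu>) {0<..<t}
    = (1/2) * (Psi a (x / t) * (measure \<mu> {-t<..<t} - (\<integral>y. Psi a (y / t) \<partial>\<mu>)) + (\<integral>y. Psi a (y / t) \<partial>\<mu>))
      * indicator {y. \<bar>y\<bar> < t} x"
proof (cases "\<bar>x\<bar> < t")
  case False
  then show ?thesis
    using emeasure_kconv_tdelta_interval[OF assms(1-3), of x] by (simp add: interval_mass_def measure_def)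
next
  case True
  interpret P: prob_space \<mu>
    using assms(3) by (simp add: borel_prob_def)
  define R where "R y = (Psi a (x / t) * indicator {-t<..<t} y + (1 - Psi a (x / t)) * Psi a (y / t)) / 2"
    for y
  have "AE y in \<mu>. y \<noteq> 0"
    using AE_not_singleton[OF _ assms(4)] assms(3) by (simp add: borel_prob_def)
  then have "(\<integral>\<^sup>+y. ennreal (interval_mass a t x y) \<partial>\<mu>) = (\<integral>\<^sup>+y. ennreal (R y) \<partial>\<mu>)"
    by (intro nn_integral_cong_AE, eventually_elim) (simp add: R_def interval_mass_eq_Psi[OF assms(1,2) True])
  moreover have "R \<in> borel_measurable \<mu>"
    unfolding R_def using assms(3) by (rule borel_measurable_borel_prob) measurable
  moreover have "0 \<le> R y" for y
    unfolding R_def using Psi_nonneg[of a] Psi_le_1[of a "x / t"] assms(1) by simp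
  ultimately have "measure (kconv a (tdelta x) \<mu>) {0<..<t} = (\<integral>y. R y \<partial>\<mu>)"
    using emeasure_kconv_tdelta_interval[OF assms(1-3), of x]
    by (simp add: measure_def integral_eq_nn_integral)
  also have "\<dots> = (Psi a (x / t) * measure \<mu> {-t<..<t} + (1 - Psi a (x / t)) * (\<integral>y. Psi a (y / t) \<partial>\<mu>)) / 2"
    using integrable_Psi[OF assms(1,3), of t] assms(3)
    by (simp add: R_def space_borel_prob borel_prob_def P.emeasure_eq_measure)
  finally show ?thesis
    using True by (simp add: algebra_simps)
qed

lemma measure_symmetric_interval:
  assumes "symmetric_measure \<mu>" and "borel_prob \<mu>" and "t > 0"
    and "emeasure \<mu> {t} = 0" and "emeasure \<mu> {-t} = 0"
  shows "measure \<mu> {-t<..<t} = 2 * measure \<mu> {..t} - 1"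
proof -
  interpret P: prob_space \<mu>
    using assms(2) by (simp add: borel_prob_def)
  have sets: "sets \<mu> = sets borel"
    using assms(2) by (simp add: borel_prob_def)
  have "uminus -` {t<..} = {..<-t}"
    by auto
  then have left_tail: "measure \<mu> {..<-t} = measure \<mu> {t<..}"
    using emeasure_symmetric_measure[OF assms(1) sets, of "{t<..}"] by (simp add: measure_def)
  have "AE y in \<mu>. y \<noteq> t \<and> y \<noteq> -t"
    using AE_not_singleton[OF sets assms(4)] AE_not_singleton[OF sets assms(5)] by simp
  then have "AE y in \<mu>. y \<in> {..t} \<longleftrightarrow> y \<in> {..<-t} \<union> {-t<..<t}"
    by eventually_elim (use assms(3) in auto)
  then have "measure \<mu> {..t} = measure \<mu> ({..<-t} \<union> {-t<..<t})"
    using sets by (intro measure_eq_AE) auto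
  also have "\<dots> = measure \<mu> {..<-t} + measure \<mu> {-t<..<t}"
    using sets by (intro P.finite_measure_Union) auto
  finally have "measure \<mu> {..t} = measure \<mu> {t<..} + measure \<mu> {-t<..<t}"
    by (simp add: left_tail)
  moreover have "measure \<mu> {t<..} = 1 - measure \<mu> {..t}"
    using P.prob_compl[of "{..t}"] sets by (simp add: space_borel_prob[OF assms(2)] Compl_eq_Diff_UNIV[symmetric])
  ultimately show ?thesis
    by simp
qed

theorem lemma2p2:
  fixes \<alpha> :: real and \<nu> :: "real measure" and n :: nat and x t :: real
  assumes "\<alpha> > 0" and "sym_prob \<nu>" and "measure \<nu> {0} = 0"
    and "n \<ge> 1" and "t > 0" and "measure \<nu> {t} = 0"
  shows "measure (kconv \<alpha> (tdelta x) (kpow \<alpha> \<nu> n)) {0<..<t}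
           = (1/2) * (Psi \<alpha> (x / t) * Hfun \<alpha> \<nu> n t + Gfun \<alpha> \<nu> t ^ n)
             * indicator {y. \<bar>y\<bar> < t} x
       \<and> kendall_trans \<alpha> \<nu> n x {0<..<t}
           = (1/2) * (Psi \<alpha> (x / t) * Hfun \<alpha> \<nu> n t + Gfun \<alpha> \<nu> t ^ n)
             * indicator {y. \<bar>y\<bar> < t} x"
proof -
  have \<nu>: "borel_prob \<nu>"
    using assms(2) by (simp add: sym_prob_def borel_prob_def)
  interpret P: prob_space \<nu>
    using \<nu> by (simp add: borel_prob_def)
  have null: "emeasure \<nu> {0} = 0" "emeasure \<nu> {t} = 0"
    using assms(3,6) by (simp_all add: P.emeasure_eq_measure)
  moreover have "emeasure \<nu> {-t} = 0"
    using assms(2) null(2) unfolding sym_prob_def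
    by (metis image_empty image_insert borel_closed closed_singleton)
  ultimately have "emeasure (kpow \<alpha> \<nu> n) {t} = 0" "emeasure (kpow \<alpha> \<nu> n) {-t} = 0"
    using emeasure_kpow_singleton[OF assms(1) \<nu>, of t] assms(5) by auto
  note interval_eq_cdf = measure_symmetric_interval[OF symmetric_measure_kpow[OF assms(1) \<nu>]
      borel_prob_kpow[OF assms(1) \<nu>] assms(5) this]
  have "measure (kconv \<alpha> (tdelta x) (kpow \<alpha> \<nu> n)) {0<..<t}
      = (1/2) * (Psi \<alpha> (x / t) * (measure (kpow \<alpha> \<nu> n) {-t<..<t} - (\<integral>y. Psi \<alpha> (y / t) \<partial>kpow \<alpha> \<nu> n))
        + (\<integral>y. Psi \<alpha> (y / t) \<partial>kpow \<alpha> \<nu> n)) * indicator {y. \<bar>y\<bar> < t} x"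
    using measure_kconv_tdelta_interval[OF assms(1,5) borel_prob_kpow[OF assms(1) \<nu>]
        emeasure_kpow_zero[OF assms(1) \<nu> null(1) assms(4)]] .
  also have "\<dots> = (1/2) * (Psi \<alpha> (x / t) * Hfun \<alpha> \<nu> n t + Gfun \<alpha> \<nu> t ^ n) * indicator {y. \<bar>y\<bar> < t} x"
    unfolding Hfun_def Fdist_def interval_eq_cdf integral_kpow_Psi[OF assms(1,5) \<nu>] ..
  finally show ?thesis
    unfolding kendall_trans_def by simp
qed

end
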